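(* Let $T:X\to X$ be a continuous map of a compact metric space $X$ which is not minimal. If $\mu$ is an ergodic $T$-invariant Borel probability measure with full support ($S_\mu=X$), then $\mu(A(T))=0$.
   Context: $T$ is minimal if for every $y\in X$, $\omega_T(y)=X$. $S_\mu$ is the support of $\mu$. $A(T)$ is the set of almost periodic points: $x$ such that for every open $U\ni x$ there is $N>0$ such that for every $n\ge1$ there exists $k\in[n,n+N]$ with $T^kx\in U$. *)

theory Defs
  imports "HOL-Probability.Probability"
begin

definition omega_limit :: "('a::topological_space \<Rightarrow> 'a) \<Rightarrow> 'a \<Rightarrow> 'a set" where
  "omega_limit T y = {x. \<forall>U. open U \<and> x \<in> U \<longrightarrow> (\<forall>N. \<exists>n\<ge>N. (T ^^ n) y \<in> U)}"

definition minimal_map :: "('a::topological_space \<Rightarrow> 'a) \<Rightarrow> bool" where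
  "minimal_map T \<longleftrightarrow> (\<forall>y. omega_limit T y = UNIV)"

definition almost_periodic_points :: "('a::topological_space \<Rightarrow> 'a) \<Rightarrow> 'a set" where
  "almost_periodic_points T = {x. \<forall>U. open U \<and> x \<in> U \<longrightarrow>
      (\<exists>N>0. \<forall>n\<ge>1. \<exists>k\<in>{n..n+N}. (T ^^ k) x \<in> U)}"

definition measure_support :: "'a::topological_space measure \<Rightarrow> 'a set" where
  "measure_support M = {x. \<forall>U. open U \<and> x \<in> U \<longrightarrow> emeasure M U > 0}"

definition invariant_measure :: "('a \<Rightarrow> 'a) \<Rightarrow> 'a measure \<Rightarrow> bool" where
  "invariant_measure T M \<longleftrightarrow> T \<in> measurable M M \<and> distr M M T = M"

definition ergodic_measure :: "('a \<Rightarrow> 'a) \<Rightarrow> 'a measure \<Rightarrow> bool" where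
  "ergodic_measure T M \<longleftrightarrow> invariant_measure T M \<and>
     (\<forall>A\<in>sets M. T -` A \<inter> space M = A \<longrightarrow> emeasure M A = 0 \<or> emeasure M A = 1)"

end

theory Submission
  imports Defs
begin

text \<open>By ergodicity, almost every point visits every open set of positive measure infinitely
often. Since \<mu> has full support and a compact metric space has a countable \<pi>-base, almost every
point x therefore has \<omega>(x) = X. But an almost periodic point x with \<omega>(x) = X lies in \<omega>(y) for
every y, hence \<omega>(y) \<supseteq> \<omega>(x) = X and T is minimal. So for non-minimal T the Borel set A(T) is
contained in a null set.\<close>

lemma continuous_on_funpow:
  fixes T :: "'a::topological_space \<Rightarrow> 'a"
  assumes "continuous_on UNIV T"
  shows "continuous_on UNIV (T ^^ n)"
  by (induction n) (auto intro: continuous_on_compose2[OF assms])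

lemma omega_limit_subset:
  fixes T :: "'a::topological_space \<Rightarrow> 'a"
  assumes "continuous_on UNIV T" "x \<in> omega_limit T y"
  shows "omega_limit T x \<subseteq> omega_limit T y"
proof
  fix z assume z: "z \<in> omega_limit T x"
  show "z \<in> omega_limit T y"
    unfolding omega_limit_def
  proof (intro CollectI allI impI)
    fix U N assume U: "open U \<and> z \<in> U"
    then obtain m where "(T ^^ m) x \<in> U"
      using z unfolding omega_limit_def by blast
    moreover have "open ((T ^^ m) -` U)"
      using U by (intro open_vimage continuous_on_funpow assms(1)) auto
    ultimately obtain n where "n \<ge> N" "(T ^^ n) y \<in> (T ^^ m) -` U"
      using assms(2) unfolding omega_limit_def by blast
    then show "\<exists>n\<ge>N. (T ^^ n) y \<in> U"
      by (intro exI[of _ "m + n"]) (simp add: funpow_add)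
  qed
qed

lemma almost_periodic_pointsE:
  assumes "x \<in> almost_periodic_points T" "open U" "x \<in> U"
  obtains N where "N > 0" "\<And>n. n \<ge> 1 \<Longrightarrow> \<exists>k\<in>{n..n+N}. (T ^^ k) x \<in> U"
  using assms unfolding almost_periodic_points_def by blast

lemma almost_periodic_transitive_point_in_omega_limit:
  fixes T :: "'a::metric_space \<Rightarrow> 'a"
  assumes cont: "continuous_on UNIV T"
    and ap: "x \<in> almost_periodic_points T"
    and transitive: "omega_limit T x = UNIV"
  shows "x \<in> omega_limit T y"
  unfolding omega_limit_def
proof (intro CollectI allI impI)
  fix V N assume "open V \<and> x \<in> V"
  then obtain e where e: "e > 0" "ball x e \<subseteq> V"
    by (meson open_contains_ball)
  have "x \<in> ball x (e / 2)"
    using e(1) by simp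
  then obtain K where K: "\<And>p. p \<ge> 1 \<Longrightarrow> \<exists>k\<in>{p..p+K}. (T ^^ k) x \<in> ball x (e / 2)"
    using almost_periodic_pointsE[OF ap open_ball] by metis
  \<comment> \<open>F is closed and contains the forward orbit of x, which is dense; so every point,
    in particular (T ^^ N) y, enters cball x (e / 2) within K steps.\<close>
  define F where "F = (\<Union>j\<le>K. (T ^^ j) -` cball x (e / 2))"
  have "closed F"
    unfolding F_def by (intro closed_UN finite_atMost ballI closed_vimage closed_cball continuous_on_funpow cont)
  have orbit_in_F: "(T ^^ p) x \<in> F" if p: "p \<ge> 1" for p
  proof -
    obtain k where k: "k \<in> {p..p+K}" "(T ^^ k) x \<in> ball x (e / 2)"
      using K p by blast
    moreover have "(T ^^ k) x = (T ^^ (k - p)) ((T ^^ p) x)"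
      using k(1) by (metis funpow_add le_add_diff_inverse2 comp_apply atLeastAtMost_iff)
    ultimately have "(T ^^ (k - p)) ((T ^^ p) x) \<in> cball x (e / 2)"
      by simp
    then show ?thesis
      using k(1) by (auto simp: F_def)
  qed
  have "F = UNIV"
  proof (rule ccontr)
    assume "F \<noteq> UNIV"
    then obtain z where "z \<in> - F" by blast
    moreover have "z \<in> omega_limit T x"
      using transitive by simp
    moreover have "open (- F)"
      using \<open>closed F\<close> by (simp add: open_Compl)
    ultimately obtain p where "p \<ge> 1" "(T ^^ p) x \<in> - F"
      unfolding omega_limit_def by blast
    then show False
      using orbit_in_F by blast
  qed
  then have "(T ^^ N) y \<in> F"
    by simp
  then obtain j where "(T ^^ j) ((T ^^ N) y) \<in> cball x (e / 2)"
    unfolding F_def by blast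
  then have "(T ^^ (j + N)) y \<in> V"
    using e by (auto simp: funpow_add)
  then show "\<exists>n\<ge>N. (T ^^ n) y \<in> V"
    by (intro exI[of _ "j + N"]) simp
qed

lemma minimal_if_almost_periodic_transitive_point:
  fixes T :: "'a::metric_space \<Rightarrow> 'a"
  assumes "continuous_on UNIV T" "x \<in> almost_periodic_points T" "omega_limit T x = UNIV"
  shows "minimal_map T"
  using omega_limit_subset[OF assms(1) almost_periodic_transitive_point_in_omega_limit[OF assms]] assms(3)
  by (auto simp: minimal_map_def)

lemma compact_imp_countable_pi_base:
  assumes "compact (UNIV :: 'a set)"
  obtains \<B> :: "'a::metric_space set set" where "countable \<B>" "\<And>B. B \<in> \<B> \<Longrightarrow> open B \<and> B \<noteq> {}"
    "\<And>U. open U \<Longrightarrow> U \<noteq> {} \<Longrightarrow> \<exists>B\<in>\<B>. B \<subseteq> U"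
proof -
  have "\<forall>m::nat. \<exists>C. finite C \<and> (\<forall>x::'a. \<exists>c\<in>C. dist c x < 1 / Suc m)"
  proof
    fix m :: nat
    obtain C where "finite C" "(UNIV :: 'a set) \<subseteq> (\<Union>c\<in>C. ball c (1 / Suc m))"
      using seq_compact_imp_totally_bounded[OF compact_imp_seq_compact[OF assms], rule_format, of "1 / Suc m"]
      by auto
    then show "\<exists>C. finite C \<and> (\<forall>x::'a. \<exists>c\<in>C. dist c x < 1 / Suc m)"
      by (intro exI[of _ C]) (auto simp: subset_eq)
  qed
  from choice[OF this] obtain C :: "nat \<Rightarrow> 'a set"
    where C: "\<And>m. finite (C m)" "\<And>m x. \<exists>c\<in>C m. dist c x < 1 / Suc m"
    by blast
  define \<B> where "\<B> = (\<Union>m. (\<lambda>c. ball c (1 / Suc m)) ` C m)"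
  show thesis
  proof (rule that[of \<B>])
    show "countable \<B>"
      unfolding \<B>_def by (intro countable_UN countableI_type countable_image countable_finite C(1))
    show "open B \<and> B \<noteq> {}" if "B \<in> \<B>" for B
      using that by (auto simp: \<B>_def)
    show "\<exists>B\<in>\<B>. B \<subseteq> U" if "open U" "U \<noteq> {}" for U
    proof -
      obtain z where "z \<in> U"
        using \<open>U \<noteq> {}\<close> by blast
      then obtain e where "e > 0" "ball z e \<subseteq> U"
        using \<open>open U\<close> open_contains_ball by blast
      obtain m where m: "1 / Suc m < e / 2"
        using \<open>e > 0\<close> nat_approx_posE half_gt_zero by blast
      obtain c where c: "c \<in> C m" "dist c z < 1 / Suc m"
        using C(2) by blast
      have "ball c (1 / Suc m) \<subseteq> ball z e"
      proof
        fix y assume "y \<in> ball c (1 / Suc m)"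
        then have "dist z y < e"
          using c(2) m dist_triangle[of z y c] by (simp add: dist_commute)
        then show "y \<in> ball z e"
          by simp
      qed
      moreover have "ball c (1 / Suc m) \<in> \<B>"
        unfolding \<B>_def using c(1) by blast
      ultimately show ?thesis
        using \<open>ball z e \<subseteq> U\<close> by blast
    qed
  qed
qed

lemma omega_limit_eq_UNIV_if_visits_pi_base:
  fixes T :: "'a::topological_space \<Rightarrow> 'a" and \<B> :: "'a set set"
  assumes "\<And>U. open U \<Longrightarrow> U \<noteq> {} \<Longrightarrow> \<exists>B\<in>\<B>. B \<subseteq> U"
    and "\<forall>B\<in>\<B>. \<forall>N. \<exists>n\<ge>N. (T ^^ n) x \<in> B"
  shows "omega_limit T x = UNIV"
  unfolding omega_limit_def
proof (intro set_eqI iffI CollectI allI impI)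
  fix z and U :: "'a set" and N :: nat
  assume "open U \<and> z \<in> U"
  then obtain B where "B \<in> \<B>" "B \<subseteq> U"
    using assms(1) by blast
  then show "\<exists>n\<ge>N. (T ^^ n) x \<in> U"
    using assms(2) by blast
qed simp

lemma almost_periodic_points_metric:
  fixes T :: "'a::metric_space \<Rightarrow> 'a"
  shows "almost_periodic_points T =
    {x. \<forall>m::nat. \<exists>N>0. \<forall>n\<ge>1. \<exists>k\<in>{n..n+N}. dist ((T ^^ k) x) x < 1 / Suc m}"
    (is "_ = {x. \<forall>m. ?returns x m}")
proof (intro set_eqI iffI CollectI allI)
  fix x m assume x: "x \<in> almost_periodic_points T"
  obtain N where "N > 0" "\<And>n. n \<ge> 1 \<Longrightarrow> \<exists>k\<in>{n..n+N}. (T ^^ k) x \<in> ball x (1 / Suc m)"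
    using almost_periodic_pointsE[OF x, of "ball x (1 / Suc m)"] by auto
  then show "?returns x m"
    by (auto simp: dist_commute)
next
  fix x assume "x \<in> {x. \<forall>m. ?returns x m}"
  then have x: "?returns x m" for m
    by simp
  show "x \<in> almost_periodic_points T"
    unfolding almost_periodic_points_def
  proof (intro CollectI allI impI)
    fix U assume "open U \<and> x \<in> U"
    then obtain e where "e > 0" "ball x e \<subseteq> U" by (meson open_contains_ball)
    moreover obtain m where "1 / Suc m < e" using \<open>e > 0\<close> nat_approx_posE by blast
    moreover obtain N where "N > 0" "\<forall>n\<ge>1. \<exists>k\<in>{n..n+N}. dist ((T ^^ k) x) x < 1 / Suc m"
      using x by blast
    ultimately show "\<exists>N>0. \<forall>n\<ge>1. \<exists>k\<in>{n..n+N}. (T ^^ k) x \<in> U"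
      by (force simp: dist_commute)
  qed
qed

lemma almost_periodic_points_borel:
  fixes T :: "'a::metric_space \<Rightarrow> 'a"
  assumes "continuous_on UNIV T"
  shows "almost_periodic_points T \<in> sets borel"
proof -
  have "(\<lambda>x. dist ((T ^^ k) x) x) \<in> borel_measurable borel" for k
    by (intro borel_measurable_continuous_onI continuous_intros continuous_on_funpow assms)
  then show ?thesis
    unfolding almost_periodic_points_metric by measurable
qed

lemma invariant_measure_funpow:
  assumes "invariant_measure T M"
  shows "invariant_measure (T ^^ n) M"
proof (induction n)
  case 0
  show ?case
    by (simp add: invariant_measure_def)
next
  case (Suc n)
  have T: "T \<in> measurable M M" "distr M M T = M"
    using assms by (auto simp: invariant_measure_def)
  have Tn: "T ^^ n \<in> measurable M M" "distr M M (T ^^ n) = M"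
    using Suc.IH by (auto simp: invariant_measure_def)
  have "distr M M (T ^^ n \<circ> T) = distr (distr M M T) M (T ^^ n)"
    using T(1) Tn(1) by (simp add: distr_distr)
  then show ?case
    unfolding invariant_measure_def funpow_Suc_right using T Tn by (simp add: measurable_comp)
qed

lemma emeasure_funpow_vimage:
  assumes "invariant_measure T M" "A \<in> sets M"
  shows "emeasure M ((T ^^ n) -` A \<inter> space M) = emeasure M A"
  using invariant_measure_funpow[OF assms(1), of n] emeasure_distr[OF _ assms(2), of "T ^^ n" M]
  by (simp add: invariant_measure_def)

lemma ergodic_AE_infinitely_often:
  assumes "prob_space M" "ergodic_measure T M" "B \<in> sets M" "emeasure M B > 0"
  shows "AE x in M. \<forall>N. \<exists>n\<ge>N. (T ^^ n) x \<in> B"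
proof -
  interpret prob_space M
    by (rule assms(1))
  have inv: "invariant_measure T M"
    using assms(2) by (simp add: ergodic_measure_def)
  then have Tn: "T ^^ n \<in> measurable M M" for n
    using invariant_measure_funpow by (auto simp: invariant_measure_def)
  define E where "E N = {x \<in> space M. \<exists>n\<ge>N. (T ^^ n) x \<in> B}" for N
  define R where "R = {x \<in> space M. \<forall>N. \<exists>n\<ge>N. (T ^^ n) x \<in> B}"
  have E_sets: "E N \<in> sets M" for N
  proof -
    have "E N = (\<Union>n\<in>{N..}. (T ^^ n) -` B \<inter> space M)"
      by (auto simp: E_def)
    also have "\<dots> \<in> sets M"
      by (intro sets.countable_UN'' measurable_sets[OF Tn assms(3)]) auto
    finally show ?thesis .
  qed
  have "E N = (T ^^ N) -` E 0 \<inter> space M" for N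
  proof -
    have "(\<exists>n\<ge>N. (T ^^ n) x \<in> B) \<longleftrightarrow> (\<exists>n. (T ^^ (n + N)) x \<in> B)" for x
      by (metis le_add2 le_add_diff_inverse2)
    then show ?thesis
      using measurable_space[OF Tn] by (auto simp: E_def funpow_add)
  qed
  then have E_eq: "emeasure M (E N) = emeasure M (E 0)" for N
    using emeasure_funpow_vimage[OF inv E_sets] by metis
  have "R = (\<Inter>N. E N)"
    by (auto simp: R_def E_def)
  moreover have "decseq E"
    by (auto simp: decseq_def E_def intro: order_trans)
  ultimately have "emeasure M R = (INF N. emeasure M (E N))"
    using INF_emeasure_decseq'[OF E_sets] by (simp add: emeasure_finite)
  also have "\<dots> = (INF N::nat. emeasure M (E 0))"
    by (intro INF_cong refl E_eq)
  also have "\<dots> = emeasure M (E 0)"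
    by simp
  also have "\<dots> \<ge> emeasure M B"
    using sets.sets_into_space[OF assms(3)]
    by (intro emeasure_mono E_sets) (auto simp: E_def intro!: exI[of _ "0::nat"])
  finally have "emeasure M R \<noteq> 0"
    using assms(4) by auto
  have R_sets: "R \<in> sets M"
    using \<open>R = (\<Inter>N. E N)\<close> E_sets by auto
  have shift: "(\<forall>N. \<exists>n\<ge>N. (T ^^ n) (T x) \<in> B) \<longleftrightarrow> (\<forall>N. \<exists>n\<ge>N. (T ^^ n) x \<in> B)" for x
  proof
    assume "\<forall>N. \<exists>n\<ge>N. (T ^^ n) (T x) \<in> B"
    then show "\<forall>N. \<exists>n\<ge>N. (T ^^ n) x \<in> B"
      by (metis funpow_Suc_right comp_apply le_SucI)
  next
    assume "\<forall>N. \<exists>n\<ge>N. (T ^^ n) x \<in> B"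
    then show "\<forall>N. \<exists>n\<ge>N. (T ^^ n) (T x) \<in> B"
      by (metis Suc_le_D Suc_le_mono funpow_Suc_right comp_apply)
  qed
  have "T -` R \<inter> space M = R"
    using measurable_space[OF Tn[of 1]] by (auto simp: R_def shift)
  then have "emeasure M R = 1"
    using assms(2) R_sets \<open>emeasure M R \<noteq> 0\<close> unfolding ergodic_measure_def by blast
  then have "AE x in M. x \<in> R"
    using AE_in_set_eq_1[OF R_sets] by (simp add: emeasure_eq_measure)
  then show ?thesis
    by eventually_elim (simp add: R_def)
qed

theorem mainTheorem13:
  fixes T :: "'a::metric_space \<Rightarrow> 'a" and \<mu> :: "'a measure"
  assumes "compact (UNIV :: 'a set)"
    and "continuous_on UNIV T"
    and "\<not> minimal_map T"
    and "sets \<mu> = sets borel"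
    and "prob_space \<mu>"
    and "ergodic_measure T \<mu>"
    and "measure_support \<mu> = UNIV"
  shows "almost_periodic_points T \<in> null_sets \<mu>"
proof -
  obtain \<B> :: "'a set set" where \<B>: "countable \<B>" "\<And>B. B \<in> \<B> \<Longrightarrow> open B \<and> B \<noteq> {}"
    "\<And>U. open U \<Longrightarrow> U \<noteq> {} \<Longrightarrow> \<exists>B\<in>\<B>. B \<subseteq> U"
    using compact_imp_countable_pi_base[OF assms(1)] by blast
  have "emeasure \<mu> B > 0" if "B \<in> \<B>" for B
    using \<B>(2)[OF that] assms(7) unfolding measure_support_def by blast
  then have "AE x in \<mu>. \<forall>B\<in>\<B>. \<forall>N. \<exists>n\<ge>N. (T ^^ n) x \<in> B"
    using \<B>(1,2) assms(4-6) by (intro AE_ball_countable' ergodic_AE_infinitely_often) auto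
  then have "AE x in \<mu>. x \<notin> almost_periodic_points T"
    by eventually_elim
      (metis omega_limit_eq_UNIV_if_visits_pi_base[OF \<B>(3)] minimal_if_almost_periodic_transitive_point assms(2,3))
  moreover have "almost_periodic_points T \<in> sets \<mu>"
    using almost_periodic_points_borel[OF assms(2)] assms(4) by simp
  ultimately show ?thesis
    using AE_iff_null_sets by blast
qed

end
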